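(* Let $m \geq 1$, let $\alpha$ be a generator of the cyclic group $\mathrm{GF}(2^m)^*$, and let $d$ be a positive integer with $\gcd(d, 2^m-1) = 1$. For $t \in \mathbb{Z}/(2^m-1)\mathbb{Z}$ define $$C_d(t) = \sum_{x \in \mathrm{GF}(2^m)^*} (-1)^{\mathrm{Tr}(\alpha^{-t} x + x^d)},$$ where $\mathrm{Tr}\colon \mathrm{GF}(2^m) \to \mathrm{GF}(2)$ is the absolute trace. If $C_d$ is three-valued, i.e. $|\{C_d(t) : t \in \mathbb{Z}/(2^m-1)\mathbb{Z}\}| = 3$, then $C_d(t) = -1$ for at least one value of $t$.
   Context: $C_d(t)$ is the cross-correlation function between the binary maximal linear sequence $\{\mathrm{Tr}(\alpha^i)\}$ and its decimation $\{\mathrm{Tr}(\alpha^{di})\}$. "$C_d$ is $v$-valued" means it takes exactly $v$ distinct values as $t$ ranges over $\mathbb{Z}/(2^m-1)\mathbb{Z}$. *)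

theory Defs
  imports Main
begin

text \<open>Absolute trace GF(2^m) -> GF(2) (values in the prime subfield {0,1}).\<close>
definition abs_trace :: "nat \<Rightarrow> 'a::field \<Rightarrow> 'a" where
  "abs_trace m x = (\<Sum>i<m. x ^ (2 ^ i))"

definition tr_sign :: "nat \<Rightarrow> 'a::field \<Rightarrow> int" where
  "tr_sign m y = (if abs_trace m y = 0 then 1 else -1)"

definition mult_generator :: "'a::field \<Rightarrow> bool" where
  "mult_generator \<alpha> \<longleftrightarrow> \<alpha> \<noteq> 0 \<and> (\<forall>x. x \<noteq> 0 \<longrightarrow> (\<exists>i::nat. x = \<alpha> ^ i))"

definition cross_corr :: "nat \<Rightarrow> 'a::{field,finite} \<Rightarrow> nat \<Rightarrow> nat \<Rightarrow> int" where
  "cross_corr m \<alpha> d t = (\<Sum>x\<in>UNIV - {0}. tr_sign m (inverse (\<alpha> ^ t) * x + x ^ d))"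

end

theory Submission
  imports Defs "HOL-Number_Theory.Number_Theory" "HOL-Computational_Algebra.Polynomial"
begin

(*
  Let W(a) = \<Sum>x. (-1)^Tr(a x + x^d) be the Walsh coefficient of Tr(x^d) at a, so that
  C_d(t) = W(\<alpha>^(-t)) - 1, and W(0) = 0 because x \<mapsto> x^d permutes the field.
  With q = 2^m, orthogonality of the characters gives \<Sum> W = q and \<Sum> W^2 = q^2 over the
  q - 1 nonzero a, and a scaling argument shows that q^2 divides \<Sum> W^3.
  If C_d never equals -1, then W takes exactly three nonzero values A < B < C on the nonzero a.
  The sums of (W - x)(W - y) over the three pairs of values force A < 0 < C and
  |A B| < 2q or |B C| < 2q, and \<Sum> (W - A)(W - B)(W - C) = 0 turns the cube divisibility into
  q^2 | (q + A)(q + B)(q + C). But 2^v(q + w) divides w for 0 < |w| < q, so the 2-adic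
  valuations of two factors sum to at most m and the third is below m.
*)

section \<open>Characteristic two, the absolute trace and the Walsh spectrum of \<open>x ^ d\<close>\<close>

lemma power_card_minus_one_eq_1:
  fixes x :: "'a::{field,finite}"
  assumes "x \<noteq> 0"
  shows "x ^ (card (UNIV :: 'a set) - 1) = 1"
proof -
  let ?U = "UNIV - {0::'a}"
  have "x ^ card ?U * (\<Prod>y\<in>?U. y) = (\<Prod>y\<in>?U. x * y)"
    by (simp add: prod.distrib)
  also have "\<dots> = (\<Prod>y\<in>?U. y)"
    by (rule prod.reindex_bij_witness[of _ "\<lambda>y. y / x" "\<lambda>y. x * y"]) (use assms in auto)
  finally have "x ^ card ?U = 1"
    by simp
  then show ?thesis
    by (simp add: card_Diff_singleton)
qed

lemma sum_UNIV_translate: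
  "(\<Sum>x\<in>UNIV. f (x + b)) = (\<Sum>x\<in>(UNIV :: 'a::{ab_group_add,finite} set). f x)"
  by (rule sum.reindex_bij_witness[of _ "\<lambda>x. x - b" "\<lambda>x. x + b"]) auto

lemma sum_UNIV_scale:
  fixes c :: "'a::{field,finite}"
  assumes "c \<noteq> 0"
  shows "(\<Sum>x\<in>UNIV. f (c * x)) = (\<Sum>x\<in>UNIV. f x)"
  by (rule sum.reindex_bij_witness[of _ "\<lambda>x. x / c" "\<lambda>x. c * x"]) (use assms in auto)

lemma sum_sum_tr_sign_homogeneous:
  fixes c :: "'a::{field,finite}"
  assumes "c \<noteq> 0" and "\<And>z x. h (c * z) (c * x) = c ^ d * h z x"
  shows "(\<Sum>z\<in>UNIV. \<Sum>x\<in>UNIV. tr_sign m (c ^ d * h z x)) = (\<Sum>z\<in>UNIV. \<Sum>x\<in>UNIV. tr_sign m (h z x))"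
proof -
  have "(\<Sum>z\<in>UNIV. \<Sum>x\<in>UNIV. tr_sign m (c ^ d * h z x))
      = (\<Sum>z\<in>UNIV. \<Sum>x\<in>UNIV. tr_sign m (h (c * z) (c * x)))"
    by (simp add: assms(2))
  also have "\<dots> = (\<Sum>z\<in>UNIV. \<Sum>x\<in>UNIV. tr_sign m (h (c * z) x))"
    by (simp add: sum_UNIV_scale[OF assms(1), of "\<lambda>x. tr_sign m (h _ x)"])
  also have "\<dots> = (\<Sum>z\<in>UNIV. \<Sum>x\<in>UNIV. tr_sign m (h z x))"
    by (rule sum_UNIV_scale[OF assms(1), of "\<lambda>z. \<Sum>x\<in>UNIV. tr_sign m (h z x)"])
  finally show ?thesis .
qed

lemma tr_sign_zero [simp]: "tr_sign m (0::'a::field) = 1"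
  by (simp add: tr_sign_def abs_trace_def power_0_left)

definition walsh_power :: "nat \<Rightarrow> nat \<Rightarrow> 'a::{field,finite} \<Rightarrow> int" where
  "walsh_power m d a = (\<Sum>x\<in>UNIV. tr_sign m (a * x + x ^ d))"

lemma cross_corr_eq_walsh_power:
  assumes "d > 0"
  shows "cross_corr m \<alpha> d t = walsh_power m d (inverse (\<alpha> ^ t)) - 1"
  unfolding walsh_power_def cross_corr_def using assms
  by (subst sum.remove[of _ 0]) (auto simp: power_0_left)

context
  fixes m :: nat
  assumes card_UNIV: "card (UNIV :: 'a::{field,finite} set) = 2 ^ m"
begin

lemma exponent_pos: "0 < m"
proof -
  have "2 \<le> card (UNIV :: 'a set)"
    using card_2_iff'[where 'a='a] card_mono[of UNIV "{0, 1 :: 'a}"] by simp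
  then show ?thesis
    using card_UNIV by (cases m) auto
qed

lemma two_eq_zero: "(2::'a) = 0"
proof -
  have "prime CHAR('a)"
    using prime_CHAR_semidom[where 'a='a] finite_imp_CHAR_pos[where 'a='a] by auto
  moreover have "CHAR('a) dvd 2 ^ m"
    using CHAR_dvd_CARD[where 'a='a] card_UNIV by simp
  ultimately have "CHAR('a) dvd 2"
    using prime_dvd_power_nat by blast
  then have "CHAR('a) = 2"
    using \<open>prime CHAR('a)\<close> two_is_prime_nat by (metis primes_dvd_imp_eq)
  then show ?thesis
    using of_nat_CHAR[where 'a='a] by simp
qed

lemma add_self_eq_zero [simp]: "(x::'a) + x = 0"
proof -
  have "x + x = 2 * x"
    by (simp only: mult_2)
  then show ?thesis
    by (simp add: two_eq_zero)
qed

lemma power_two_power_add: "((x::'a) + y) ^ 2 ^ i = x ^ 2 ^ i + y ^ 2 ^ i"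
proof (induction i)
  case (Suc i)
  have "(x + y) ^ 2 ^ Suc i = ((x + y) ^ 2 ^ i)\<^sup>2"
    by (simp add: power_mult[symmetric] mult.commute)
  also have "\<dots> = (x ^ 2 ^ i)\<^sup>2 + (y ^ 2 ^ i)\<^sup>2"
    using Suc two_eq_zero by (simp add: power2_sum)
  finally show ?case
    by (simp add: power_mult[symmetric] mult.commute)
qed simp

lemma power_card_eq_same: "(x::'a) ^ 2 ^ m = x"
proof (cases "x = 0")
  case False
  have "x ^ 2 ^ m = x * x ^ (2 ^ m - 1)"
    by (metis One_nat_def Suc_pred pos2 power_Suc zero_less_power)
  then show ?thesis
    using power_card_minus_one_eq_1[OF False] card_UNIV by simp
qed simp

lemma power_mod_card_minus_one:
  assumes "(x::'a) \<noteq> 0"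
  shows "x ^ n = x ^ (n mod (2 ^ m - 1))"
proof -
  have "x ^ n = x ^ ((2 ^ m - 1) * (n div (2 ^ m - 1)) + n mod (2 ^ m - 1))"
    by simp
  also have "\<dots> = (x ^ (2 ^ m - 1)) ^ (n div (2 ^ m - 1)) * x ^ (n mod (2 ^ m - 1))"
    by (simp only: power_add power_mult)
  finally show ?thesis
    using power_card_minus_one_eq_1[OF assms] card_UNIV by simp
qed

lemma power2_sum_char2: "(\<Sum>i\<in>I. f i :: 'a)\<^sup>2 = (\<Sum>i\<in>I. (f i)\<^sup>2)"
proof (induction I rule: infinite_finite_induct)
  case (insert i I)
  then show ?case
    using power_two_power_add[of _ _ 1] by simp
qed simp_all

lemma abs_trace_add: "abs_trace m ((x::'a) + y) = abs_trace m x + abs_trace m y"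
  by (simp add: abs_trace_def power_two_power_add sum.distrib)

lemma abs_trace_0_or_1: "abs_trace m (x::'a) = 0 \<or> abs_trace m x = 1"
proof -
  have "(abs_trace m x)\<^sup>2 + x = (\<Sum>i<Suc m. x ^ 2 ^ i)"
    unfolding abs_trace_def power2_sum_char2 sum.lessThan_Suc_shift
    by (simp add: power_mult[symmetric] mult.commute)
  also have "\<dots> = abs_trace m x + x"
    by (simp add: abs_trace_def power_card_eq_same)
  finally have "abs_trace m x * (abs_trace m x - 1) = 0"
    by (simp add: power2_eq_square algebra_simps)
  then show ?thesis
    by simp
qed

lemma tr_sign_add: "tr_sign m ((x::'a) + y) = tr_sign m x * tr_sign m y"
  using abs_trace_0_or_1[of x] abs_trace_0_or_1[of y]
  by (auto simp: tr_sign_def abs_trace_add)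

lemma tr_sign_mult_self: "tr_sign m (x::'a) * tr_sign m x = 1"
  by (simp add: tr_sign_def)

text \<open>The trace is a polynomial of degree \<open>2 ^ (m - 1)\<close>, too small to vanish on all \<open>2 ^ m\<close> elements.\<close>
lemma abs_trace_not_identically_zero: "\<exists>b::'a. abs_trace m b \<noteq> 0"
proof (rule ccontr)
  assume "\<not> (\<exists>b::'a. abs_trace m b \<noteq> 0)"
  define p :: "'a poly" where "p = (\<Sum>i<m. monom 1 (2 ^ i))"
  have "{x. poly p x = 0} = UNIV"
    using \<open>\<not> (\<exists>b. abs_trace m b \<noteq> 0)\<close> by (simp add: p_def abs_trace_def poly_sum poly_monom)
  moreover have "coeff p (2 ^ (m - 1)) = (\<Sum>i\<in>{m - 1}. 1)"
    unfolding p_def coeff_sum coeff_monom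
    by (rule sum.mono_neutral_cong_right) (use exponent_pos in auto)
  then have "p \<noteq> 0"
    by auto
  then have "card {x. poly p x = 0} \<le> degree p"
    by (rule card_poly_roots_bound)
  moreover have "degree p \<le> 2 ^ (m - 1)"
    unfolding p_def
    by (rule degree_sum_le) (auto intro!: order.trans[OF degree_monom_le] power_increasing)
  ultimately have "card (UNIV :: 'a set) \<le> 2 ^ (m - 1)"
    by (metis le_trans)
  then show False
    using card_UNIV exponent_pos by simp
qed

lemma sum_tr_sign: "(\<Sum>x\<in>UNIV. tr_sign m (x::'a)) = 0"
proof -
  obtain b :: 'a where "tr_sign m b = -1"
    using abs_trace_not_identically_zero by (auto simp: tr_sign_def)
  then have "(\<Sum>x\<in>UNIV. tr_sign m (x::'a)) = - (\<Sum>x\<in>UNIV. tr_sign m (x + b))"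
    by (simp add: tr_sign_add sum_negf)
  then show ?thesis
    by (simp add: sum_UNIV_translate)
qed

lemma sum_tr_sign_mult: "(\<Sum>a\<in>UNIV. tr_sign m (a * (s::'a))) = (if s = 0 then 2 ^ m else 0)"
proof (cases "s = 0")
  case False
  then show ?thesis
    using sum_UNIV_scale[OF False, of "tr_sign m"] sum_tr_sign by (simp add: mult.commute)
qed (simp add: card_UNIV)

lemma sum_sum_tr_sign_mult:
  "(\<Sum>a\<in>UNIV. \<Sum>z\<in>UNIV. tr_sign m (a * (z::'a)) * g z) = 2 ^ m * g 0"
proof -
  have "(\<Sum>a\<in>UNIV. \<Sum>z\<in>UNIV. tr_sign m (a * (z::'a)) * g z)
      = (\<Sum>z\<in>UNIV. (\<Sum>a\<in>UNIV. tr_sign m (a * z)) * g z)"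
    by (subst sum.swap) (simp add: sum_distrib_right)
  also have "\<dots> = (\<Sum>z\<in>UNIV. if z = 0 then 2 ^ m * g z else 0)"
    by (rule sum.cong) (auto simp: sum_tr_sign_mult)
  finally show ?thesis
    by simp
qed

lemma tr_sign_convolution:
  "(\<Sum>x\<in>UNIV. tr_sign m (a * x) * g x) * (\<Sum>y\<in>UNIV. tr_sign m (a * y) * h y)
    = (\<Sum>z\<in>UNIV. tr_sign m (a * (z::'a)) * (\<Sum>x\<in>UNIV. g x * h (z + x)))"
proof -
  have "(\<Sum>x\<in>UNIV. tr_sign m (a * x) * g x) * (\<Sum>y\<in>UNIV. tr_sign m (a * y) * h y)
      = (\<Sum>x\<in>UNIV. \<Sum>y\<in>UNIV. tr_sign m (a * (x + y)) * (g x * h y))"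
    by (simp add: sum_product tr_sign_add distrib_left mult_ac)
  also have "\<dots> = (\<Sum>x\<in>UNIV. \<Sum>z\<in>UNIV. tr_sign m (a * z) * (g x * h (z + x)))"
  proof (rule sum.cong [OF refl])
    fix x :: 'a
    have cancel: "x + (z + x) = z" for z :: 'a
      by (metis add.left_commute add_self_eq_zero add_0_right)
    show "(\<Sum>y\<in>UNIV. tr_sign m (a * (x + y)) * (g x * h y))
        = (\<Sum>z\<in>UNIV. tr_sign m (a * z) * (g x * h (z + x)))"
      using sum_UNIV_translate[of "\<lambda>y. tr_sign m (a * (x + y)) * (g x * h y)" x]
      by (simp only: cancel)
  qed
  also have "\<dots> = (\<Sum>z\<in>UNIV. tr_sign m (a * z) * (\<Sum>x\<in>UNIV. g x * h (z + x)))"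
    by (subst sum.swap) (simp add: sum_distrib_left)
  finally show ?thesis .
qed

lemma bij_power_coprime:
  assumes "d > 0" "coprime d (2 ^ m - 1)"
  shows "bij (\<lambda>x::'a. x ^ d)"
proof -
  obtain u where u: "[d * u = 1] (mod 2 ^ m - 1)"
    using cong_solve_coprime_nat assms(2) by auto
  have invert: "(x ^ d) ^ u = x" if "x \<noteq> 0" for x :: 'a
    using power_mod_card_minus_one[OF that, of "d * u"] power_mod_card_minus_one[OF that, of 1] u
    by (simp add: power_mult cong_def)
  have "inj (\<lambda>x::'a. x ^ d)"
  proof (rule injI)
    fix x y :: 'a
    assume "x ^ d = y ^ d"
    then show "x = y"
      using invert assms(1) by (metis power_eq_0_iff)
  qed
  then show ?thesis
    by (simp add: bij_def finite_UNIV_inj_surj)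
qed

lemma sum_UNIV_power_coprime:
  assumes "d > 0" "coprime d (2 ^ m - 1)"
  shows "(\<Sum>x\<in>UNIV. f ((x::'a) ^ d)) = (\<Sum>x\<in>UNIV. f x)"
  by (rule sum.reindex_bij_betw[OF bij_power_coprime[OF assms]])

lemma walsh_power_eq_sum_product:
  "walsh_power m d a = (\<Sum>x\<in>UNIV. tr_sign m (a * x) * tr_sign m ((x::'a) ^ d))"
  by (simp add: walsh_power_def tr_sign_add)

lemma walsh_power_zero:
  assumes "d > 0" "coprime d (2 ^ m - 1)"
  shows "walsh_power m d (0::'a) = 0"
  using sum_UNIV_power_coprime[OF assms, of "tr_sign m"] sum_tr_sign
  by (simp add: walsh_power_def)

lemma sum_walsh_power:
  assumes "d > 0"
  shows "(\<Sum>a\<in>UNIV. walsh_power m d (a::'a)) = 2 ^ m"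
  using sum_sum_tr_sign_mult[of "\<lambda>x. tr_sign m ((x::'a) ^ d)"] assms
  by (simp add: walsh_power_eq_sum_product power_0_left)

lemma sum_walsh_power_square: "(\<Sum>a\<in>UNIV. (walsh_power m d (a::'a))\<^sup>2) = (2 ^ m)\<^sup>2"
proof -
  let ?g = "\<lambda>x::'a. tr_sign m (x ^ d)"
  have "(\<Sum>a\<in>UNIV. (walsh_power m d (a::'a))\<^sup>2)
      = (\<Sum>a\<in>UNIV. \<Sum>z\<in>UNIV. tr_sign m (a * z) * (\<Sum>x\<in>UNIV. ?g x * ?g (z + x)))"
    by (simp add: walsh_power_eq_sum_product power2_eq_square tr_sign_convolution)
  also have "\<dots> = 2 ^ m * (\<Sum>x\<in>UNIV. ?g x * ?g (0 + x))"
    by (rule sum_sum_tr_sign_mult)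
  finally show ?thesis
    by (simp add: card_UNIV power2_eq_square tr_sign_mult_self)
qed

lemma sum_walsh_power_cube:
  "(\<Sum>a\<in>UNIV. walsh_power m d (a::'a) ^ 3)
    = 2 ^ m * (\<Sum>z\<in>UNIV. \<Sum>x\<in>UNIV. tr_sign m (x ^ d + (z + x) ^ d + (z::'a) ^ d))"
proof -
  let ?g = "\<lambda>x::'a. tr_sign m (x ^ d)"
  have "(\<Sum>a\<in>UNIV. walsh_power m d (a::'a) ^ 3)
      = (\<Sum>a\<in>UNIV. (\<Sum>z\<in>UNIV. tr_sign m (a * z) * (\<Sum>x\<in>UNIV. ?g x * ?g (z + x)))
          * (\<Sum>y\<in>UNIV. tr_sign m (a * y) * ?g y))"
    by (simp add: walsh_power_eq_sum_product power3_eq_cube tr_sign_convolution)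
  also have "\<dots> = (\<Sum>a\<in>UNIV. \<Sum>w\<in>UNIV. tr_sign m (a * w)
      * (\<Sum>z\<in>UNIV. (\<Sum>x\<in>UNIV. ?g x * ?g (z + x)) * ?g (w + z)))"
    by (simp only: tr_sign_convolution)
  also have "\<dots> = 2 ^ m * (\<Sum>z\<in>UNIV. (\<Sum>x\<in>UNIV. ?g x * ?g (z + x)) * ?g (0 + z))"
    by (rule sum_sum_tr_sign_mult)
  also have "(\<Sum>z\<in>UNIV. (\<Sum>x\<in>UNIV. ?g x * ?g (z + x)) * ?g (0 + z))
      = (\<Sum>z\<in>UNIV. \<Sum>x\<in>UNIV. tr_sign m (x ^ d + (z + x) ^ d + (z::'a) ^ d))"
    by (simp add: sum_distrib_right tr_sign_add)
  finally show ?thesis .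
qed

text \<open>The summand only depends on the form \<open>h z x = x ^ d + (z + x) ^ d + z ^ d\<close>, homogeneous of
  degree \<open>d\<close>, so the double sum \<open>T\<close> is invariant under scaling \<open>(z, x)\<close> by any \<open>c \<noteq> 0\<close>.
  Summing over all \<open>c\<close> and using that \<open>c \<mapsto> c ^ d\<close> permutes the field gives
  \<open>q\<^sup>2 + (q - 1) T \<equiv> 0 (mod q)\<close>.\<close>
lemma dvd_sum_tr_sign_power_triple:
  assumes "d > 0" "coprime d (2 ^ m - 1)"
  shows "(2::int) ^ m dvd (\<Sum>z\<in>UNIV. \<Sum>x\<in>UNIV. tr_sign m (x ^ d + (z + x) ^ d + (z::'a) ^ d))"
proof -
  define h where "h z x = x ^ d + (z + x) ^ d + z ^ d" for z x :: 'a
  define T where "T = (\<Sum>z\<in>UNIV. \<Sum>x\<in>UNIV. tr_sign m (h z x))"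
  have scaled: "(\<Sum>z\<in>UNIV. \<Sum>x\<in>UNIV. tr_sign m (c ^ d * h z x)) = (if c = 0 then 2 ^ m * 2 ^ m else T)"
    for c :: 'a
  proof (cases "c = 0")
    case False
    have "h (c * z) (c * x) = c ^ d * h z x" for z x
      by (simp only: h_def distrib_left[symmetric] power_mult_distrib)
    then show ?thesis
      using sum_sum_tr_sign_homogeneous[OF False] False by (simp add: T_def)
  qed (use assms(1) card_UNIV in \<open>simp add: power_0_left\<close>)
  have "2 ^ m * 2 ^ m + (2 ^ m - 1) * T = (\<Sum>c\<in>UNIV. if c = (0::'a) then 2 ^ m * 2 ^ m else T)"
    using card_UNIV exponent_pos
    by (subst sum.remove[of _ 0]) (simp_all add: card_Diff_singleton of_nat_diff)
  also have "\<dots> = (\<Sum>c\<in>UNIV. \<Sum>z\<in>UNIV. \<Sum>x\<in>UNIV. tr_sign m (c ^ d * h z x))"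
    by (rule sum.cong[OF refl]) (rule scaled[symmetric])
  also have "\<dots> = (\<Sum>z\<in>UNIV. \<Sum>c\<in>UNIV. \<Sum>x\<in>UNIV. tr_sign m (c ^ d * h z x))"
    by (rule sum.swap)
  also have "\<dots> = (\<Sum>z\<in>UNIV. \<Sum>x\<in>UNIV. \<Sum>c\<in>UNIV. tr_sign m (c ^ d * h z x))"
    by (rule sum.cong[OF refl], rule sum.swap)
  also have "\<dots> = (\<Sum>z\<in>UNIV. \<Sum>x\<in>UNIV. \<Sum>c\<in>UNIV. tr_sign m (c * h z x))"
    by (intro sum.cong refl sum_UNIV_power_coprime[OF assms, of "\<lambda>c. tr_sign m (c * h _ _)"])
  also have "\<dots> = (\<Sum>z\<in>UNIV. \<Sum>x\<in>UNIV. if h z x = 0 then 2 ^ m else 0)"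
    by (simp add: sum_tr_sign_mult)
  finally have "2 ^ m * 2 ^ m + (2 ^ m - 1) * T
      = (\<Sum>z\<in>UNIV. \<Sum>x\<in>UNIV. if h z x = 0 then 2 ^ m else 0)" .
  moreover have "(2::int) ^ m dvd (\<Sum>z\<in>UNIV. \<Sum>x\<in>UNIV. if h z x = 0 then 2 ^ m else 0)"
    by (intro dvd_sum) auto
  ultimately have "(2::int) ^ m dvd 2 ^ m * 2 ^ m + (2 ^ m - 1) * T"
    by simp
  then have "(2::int) ^ m dvd 2 ^ m * T - (2 ^ m - 1) * T"
    by (simp add: dvd_add_right_iff)
  then show ?thesis
    by (simp add: T_def h_def algebra_simps)
qed

lemma dvd_sum_walsh_power_cube:
  assumes "d > 0" "coprime d (2 ^ m - 1)"
  shows "(2 ^ m)\<^sup>2 dvd (\<Sum>a\<in>UNIV. walsh_power m d (a::'a) ^ 3)"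
  unfolding sum_walsh_power_cube power2_eq_square
  by (rule mult_dvd_mono[OF dvd_refl dvd_sum_tr_sign_power_triple[OF assms]])

lemma inverse_powers_eq_nonzero:
  assumes "mult_generator (\<alpha>::'a)"
  shows "(\<lambda>t. inverse (\<alpha> ^ t)) ` {0..<2 ^ m - 1} = UNIV - {0}"
proof
  have "\<alpha> \<noteq> 0"
    using assms by (simp add: mult_generator_def)
  then show "(\<lambda>t. inverse (\<alpha> ^ t)) ` {0..<2 ^ m - 1} \<subseteq> UNIV - {0}"
    by auto
  show "UNIV - {0} \<subseteq> (\<lambda>t. inverse (\<alpha> ^ t)) ` {0..<2 ^ m - 1}"
  proof
    fix a :: 'a
    assume "a \<in> UNIV - {0}"
    then have "inverse a \<noteq> 0"
      by simp
    then obtain i where "inverse a = \<alpha> ^ i"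
      using assms unfolding mult_generator_def by blast
    then have "a = inverse (\<alpha> ^ (i mod (2 ^ m - 1)))"
      using power_mod_card_minus_one[OF \<open>\<alpha> \<noteq> 0\<close>] by (metis inverse_inverse_eq)
    moreover have "(2::nat) ^ 1 \<le> 2 ^ m"
      using exponent_pos by (intro power_increasing) auto
    then have "i mod (2 ^ m - 1) < 2 ^ m - 1"
      by simp
    ultimately show "a \<in> (\<lambda>t. inverse (\<alpha> ^ t)) ` {0..<2 ^ m - 1}"
      by auto
  qed
qed

end

section \<open>Three nonzero spectral values are impossible\<close>

lemma card_eq_3_obtain_ordered:
  fixes S :: "'a::linorder set"
  assumes "card S = 3"
  obtains A B C where "S = {A, B, C}" "A < B" "B < C"
proof -
  have "finite S"
    using assms by (metis card.infinite zero_neq_numeral)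
  have "length (sorted_list_of_set S) = 3"
    using assms by simp
  then obtain A B C where xs: "sorted_list_of_set S = [A, B, C]"
    by (metis (no_types) length_0_conv length_Suc_conv numeral_3_eq_3)
  have "sorted_wrt (<) [A, B, C]"
    using strict_sorted_list_of_set[of S] xs by simp
  moreover have "S = {A, B, C}"
    using set_sorted_list_of_set[OF \<open>finite S\<close>] xs by simp
  ultimately show ?thesis
    using that by simp
qed

text \<open>For a spectrum with first two moments \<open>q\<close> and \<open>q\<^sup>2\<close> on \<open>q - 1\<close> points,
  \<open>q\<^sup>2 - (x + y) q + x y (q - 1)\<close> is the sum of \<open>(W a - x) (W a - y)\<close>.\<close>
lemma quadratic_moment_neg_imp_opposite_signs:
  fixes x y q :: int
  assumes "2 \<le> q" "x < q" "y < q" "q\<^sup>2 - (x + y) * q + x * y * (q - 1) < 0"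
  shows "x * y < 0"
proof (rule ccontr)
  assume "\<not> x * y < 0"
  then have "0 \<le> (q - 2) * (x * y)"
    using assms(1) by simp
  moreover have "0 < (q - x) * (q - y)"
    using assms(2,3) by simp
  moreover have "q\<^sup>2 - (x + y) * q + x * y * (q - 1) = (q - x) * (q - y) + (q - 2) * (x * y)"
    by (simp add: algebra_simps power2_eq_square)
  ultimately show False
    using assms(4) by linarith
qed

lemma quadratic_moment_pos_imp_small_product:
  fixes x y q :: int
  assumes "1 \<le> q" "x < 0" "0 < y" "- x < q" "0 < q\<^sup>2 - (x + y) * q + x * y * (q - 1)"
  shows "\<bar>x * y\<bar> < 2 * q"
proof (rule ccontr)
  assume "\<not> \<bar>x * y\<bar> < 2 * q"
  then have large: "2 * q \<le> - (x * y)"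
    using assms(2,3) by (simp add: abs_if mult_neg_pos)
  have "q\<^sup>2 - (x + y) * q + x * y * (q - 1) = q * q - x * q - y * q - (- (x * y)) * (q - 1)"
    by (simp add: algebra_simps power2_eq_square)
  also have "\<dots> \<le> q * q - x * q - y * q - (2 * q) * (q - 1)"
    using mult_right_mono[OF large, of "q - 1"] assms(1) by simp
  also have "\<dots> = q * (2 - x - y - q)"
    by (simp add: algebra_simps)
  also have "\<dots> \<le> 0"
    using assms by (intro mult_nonneg_nonpos) auto
  finally show False
    using assms(5) by simp
qed

lemma multiplicity_two_power_add:
  fixes w :: int
  assumes "w \<noteq> 0" "\<bar>w\<bar> < 2 ^ m"
  shows "multiplicity 2 (2 ^ m + w) < m" and "2 ^ multiplicity 2 (2 ^ m + w) \<le> \<bar>w\<bar>"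
proof -
  let ?j = "multiplicity (2::int) (2 ^ m + w)"
  have dvd_sum: "2 ^ ?j dvd 2 ^ m + w"
    by (rule multiplicity_dvd)
  show less: "?j < m"
  proof (rule ccontr)
    assume "\<not> ?j < m"
    then have "(2::int) ^ m dvd 2 ^ ?j"
      by (simp add: le_imp_power_dvd)
    then have "(2::int) ^ m dvd w"
      using dvd_sum by (metis dvd_add_right_iff dvd_refl dvd_trans)
    then show False
      using assms dvd_imp_le_int[of w "2 ^ m"] by simp
  qed
  have "2 ^ ?j dvd w"
    using dvd_sum less by (metis dvd_add_right_iff le_imp_power_dvd less_imp_le)
  then show "2 ^ ?j \<le> \<bar>w\<bar>"
    using assms(1) dvd_imp_le_int[of w] by force
qed

lemma multiplicity_two_power_add_pair:
  fixes x y :: int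
  assumes "x \<noteq> 0" "y \<noteq> 0" "\<bar>x\<bar> < 2 ^ m" "\<bar>y\<bar> < 2 ^ m" "\<bar>x * y\<bar> < 2 * 2 ^ m"
  shows "multiplicity 2 (2 ^ m + x) + multiplicity 2 (2 ^ m + y) \<le> m"
proof -
  have "(2::int) ^ (multiplicity 2 (2 ^ m + x) + multiplicity 2 (2 ^ m + y))
      = 2 ^ multiplicity 2 (2 ^ m + x) * 2 ^ multiplicity 2 (2 ^ m + y)"
    by (simp add: power_add)
  also have "\<dots> \<le> \<bar>x\<bar> * \<bar>y\<bar>"
    using multiplicity_two_power_add(2) assms by (intro mult_mono) auto
  also have "\<dots> < 2 ^ Suc m"
    using assms(5) by (simp add: abs_mult)
  finally show ?thesis
    by (metis power_strict_increasing_iff one_less_numeral_iff semiring_norm(76) less_Suc_eq_le)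
qed

lemma dvd_cube_moment_imp_dvd_product:
  fixes A B C q :: int
  assumes "q\<^sup>2 dvd (A + B + C) * q\<^sup>2 - (A * B + B * C + C * A) * q + A * B * C * (q - 1)"
    (is "q\<^sup>2 dvd ?X")
  shows "q\<^sup>2 dvd (q + A) * (q + B) * (q + C)"
proof -
  have "q dvd ?X"
    using assms by (metis dvd_mult_left power2_eq_square)
  moreover have "?X = q * ((A + B + C) * q - (A * B + B * C + C * A) + A * B * C) - A * B * C"
    by (simp add: algebra_simps power2_eq_square)
  ultimately have "q dvd A * B * C"
    by (metis dvd_diff_right_iff dvd_triv_left)
  then have "q\<^sup>2 dvd q * (A * B * C)"
    by (simp add: power2_eq_square)
  moreover have "(q + A) * (q + B) * (q + C) = q\<^sup>2 * (q + 2 * (A + B + C)) + q * (A * B * C) - ?X"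
    by (simp add: algebra_simps power2_eq_square)
  ultimately show ?thesis
    using assms by simp
qed

lemma multiplicity_sum_ge_of_dvd_product:
  fixes a b c :: int
  assumes "a \<noteq> 0" "b \<noteq> 0" "c \<noteq> 0" "(2 ^ m)\<^sup>2 dvd a * b * c"
  shows "2 * m \<le> multiplicity 2 a + multiplicity 2 b + multiplicity 2 c"
proof -
  have "(2::int) ^ (2 * m) dvd a * b * c"
    using assms(4) by (simp add: power_mult mult.commute)
  then have "2 * m \<le> multiplicity 2 (a * b * c)"
    using assms(1-3) by (subst (asm) power_dvd_iff_le_multiplicity) auto
  also have "\<dots> = multiplicity 2 a + multiplicity 2 b + multiplicity 2 c"
    using assms(1-3) by (simp add: prime_elem_multiplicity_mult_distrib)
  finally show ?thesis .
qed

lemma no_three_nonzero_values: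
  fixes A B C q :: int
  assumes q: "q = 2 ^ m" and order: "A < B" "B < C"
    and nonzero: "A \<noteq> 0" "B \<noteq> 0" "C \<noteq> 0"
    and bounded: "\<bar>A\<bar> < q" "\<bar>B\<bar> < q" "\<bar>C\<bar> < q"
    and BC: "0 < q\<^sup>2 - (B + C) * q + B * C * (q - 1)"
    and AC: "q\<^sup>2 - (A + C) * q + A * C * (q - 1) < 0"
    and AB: "0 < q\<^sup>2 - (A + B) * q + A * B * (q - 1)"
    and cube: "q\<^sup>2 dvd (q + A) * (q + B) * (q + C)"
  shows False
proof -
  define v where "v w = multiplicity (2::int) (q + w)" for w
  have "1 < q"
    using bounded(1) nonzero(1) by linarith
  then have "m \<noteq> 0"
    using q by (metis power_0 less_irrefl)
  then have "2 \<le> q"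
    using q by (simp add: self_le_power)
  have "A * C < 0"
    using quadratic_moment_neg_imp_opposite_signs[OF \<open>2 \<le> q\<close> _ _ AC] bounded by simp
  then have "A < 0" "0 < C"
    using order by (auto simp: mult_less_0_iff)
  have valuations: "2 * m \<le> v A + v B + v C"
    using multiplicity_sum_ge_of_dvd_product[OF _ _ _ cube[unfolded q]] bounded
    by (auto simp: q v_def)
  show False
  proof (cases "0 < B")
    case True
    have "\<bar>A * B\<bar> < 2 * q"
      using quadratic_moment_pos_imp_small_product[OF _ \<open>A < 0\<close> True _ AB] \<open>2 \<le> q\<close> bounded
      by simp
    then have "v A + v B \<le> m"
      using multiplicity_two_power_add_pair[of A B m] nonzero bounded by (simp add: q v_def)
    moreover have "v C < m"
      using multiplicity_two_power_add(1)[of C m] nonzero bounded by (simp add: q v_def)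
    ultimately show False
      using valuations by linarith
  next
    case False
    then have "B < 0"
      using nonzero by simp
    have "\<bar>B * C\<bar> < 2 * q"
      using quadratic_moment_pos_imp_small_product[OF _ \<open>B < 0\<close> \<open>0 < C\<close> _ BC] \<open>2 \<le> q\<close> bounded
      by simp
    then have "v B + v C \<le> m"
      using multiplicity_two_power_add_pair[of B C m] nonzero bounded by (simp add: q v_def)
    moreover have "v A < m"
      using multiplicity_two_power_add(1)[of A m] nonzero bounded by (simp add: q v_def)
    ultimately show False
      using valuations by linarith
  qed
qed

lemma sum_quadratic_moment:
  fixes f :: "'b \<Rightarrow> int"
  shows "(\<Sum>a\<in>D. (f a - x) * (f a - y))
    = (\<Sum>a\<in>D. (f a)\<^sup>2) - (x + y) * (\<Sum>a\<in>D. f a) + x * y * int (card D)"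
proof -
  have "(\<Sum>a\<in>D. (f a - x) * (f a - y)) = (\<Sum>a\<in>D. (f a)\<^sup>2 - (x + y) * f a + x * y)"
    by (rule sum.cong) (auto simp: algebra_simps power2_eq_square)
  then show ?thesis
    by (simp add: sum.distrib sum_subtractf sum_distrib_left)
qed

lemma sum_cubic_moment:
  fixes f :: "'b \<Rightarrow> int"
  shows "(\<Sum>a\<in>D. (f a - x) * (f a - y) * (f a - z))
    = (\<Sum>a\<in>D. f a ^ 3) - (x + y + z) * (\<Sum>a\<in>D. (f a)\<^sup>2)
      + (x * y + y * z + z * x) * (\<Sum>a\<in>D. f a) - x * y * z * int (card D)"
proof -
  have "(\<Sum>a\<in>D. (f a - x) * (f a - y) * (f a - z))
      = (\<Sum>a\<in>D. f a ^ 3 - (x + y + z) * (f a)\<^sup>2 + (x * y + y * z + z * x) * f a - x * y * z)"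
    by (rule sum.cong) (auto simp: algebra_simps power2_eq_square power3_eq_cube)
  then show ?thesis
    by (simp add: sum.distrib sum_subtractf sum_distrib_left)
qed

lemma abs_less_of_sum_squares:
  fixes f :: "'b \<Rightarrow> int"
  assumes "finite D" "(\<Sum>a\<in>D. (f a)\<^sup>2) = q\<^sup>2" "a \<in> D" "b \<in> D" "f b \<noteq> f a" "f b \<noteq> 0"
  shows "\<bar>f a\<bar> < \<bar>q\<bar>"
proof -
  have "a \<noteq> b"
    using assms(5) by auto
  then have "(f a)\<^sup>2 + (f b)\<^sup>2 = (\<Sum>c\<in>{a, b}. (f c)\<^sup>2)"
    by simp
  also have "\<dots> \<le> q\<^sup>2"
    unfolding assms(2)[symmetric] using assms(1,3,4) by (intro sum_mono2) auto
  finally have "(f a)\<^sup>2 < q\<^sup>2"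
    using assms(6) by (smt (verit) zero_less_power2)
  then show ?thesis
    by (metis power2_abs power_less_imp_less_base abs_ge_zero)
qed

lemma sum_three_valued_products_signs:
  fixes f :: "'b \<Rightarrow> int"
  assumes "finite D" and in_values: "\<And>a. a \<in> D \<Longrightarrow> f a \<in> {A, B, C}" and order: "A < B" "B < C"
    and "aA \<in> D" "f aA = A" "aB \<in> D" "f aB = B" "aC \<in> D" "f aC = C"
  shows "0 < (\<Sum>a\<in>D. (f a - B) * (f a - C))" and "(\<Sum>a\<in>D. (f a - A) * (f a - C)) < 0"
    and "0 < (\<Sum>a\<in>D. (f a - A) * (f a - B))"
proof -
  show "0 < (\<Sum>a\<in>D. (f a - B) * (f a - C))"
  proof (rule sum_pos2[OF \<open>finite D\<close> \<open>aA \<in> D\<close>])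
    show "0 \<le> (f a - B) * (f a - C)" if "a \<in> D" for a
      using in_values[OF that] order by (auto simp: mult_nonpos_nonpos)
  qed (use \<open>f aA = A\<close> order in \<open>simp add: mult_neg_neg\<close>)
  show "0 < (\<Sum>a\<in>D. (f a - A) * (f a - B))"
  proof (rule sum_pos2[OF \<open>finite D\<close> \<open>aC \<in> D\<close>])
    show "0 \<le> (f a - A) * (f a - B)" if "a \<in> D" for a
      using in_values[OF that] order by auto
  qed (use \<open>f aC = C\<close> order in simp)
  have "0 < (\<Sum>a\<in>D. (f a - A) * (C - f a))"
  proof (rule sum_pos2[OF \<open>finite D\<close> \<open>aB \<in> D\<close>])
    show "0 \<le> (f a - A) * (C - f a)" if "a \<in> D" for a
      using in_values[OF that] order by auto
  qed (use \<open>f aB = B\<close> order in simp)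
  also have "\<dots> = - (\<Sum>a\<in>D. (f a - A) * (f a - C))"
    by (simp add: sum_negf[symmetric] algebra_simps)
  finally show "(\<Sum>a\<in>D. (f a - A) * (f a - C)) < 0"
    by simp
qed

lemma three_valued_moments_impossible:
  fixes f :: "'b \<Rightarrow> int" and q :: int
  assumes q: "q = 2 ^ m" and "finite D" and card_D: "int (card D) = q - 1"
    and three: "card (f ` D) = 3" and nonzero: "0 \<notin> f ` D"
    and moment1: "(\<Sum>a\<in>D. f a) = q"
    and moment2: "(\<Sum>a\<in>D. (f a)\<^sup>2) = q\<^sup>2"
    and moment3: "q\<^sup>2 dvd (\<Sum>a\<in>D. f a ^ 3)"
  shows False
proof -
  obtain A B C where image_f: "f ` D = {A, B, C}" and order: "A < B" "B < C"
    using card_eq_3_obtain_ordered[OF three] by blast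
  have attained: "\<exists>a\<in>D. f a = w" if "w \<in> {A, B, C}" for w
    using that image_f by (metis imageE)
  have bounded: "\<bar>w\<bar> < q" if w: "w \<in> {A, B, C}" for w
  proof -
    obtain a where "a \<in> D" "f a = w"
      using attained[OF w] by blast
    moreover obtain b where "b \<in> D" "f b \<noteq> w"
      using attained order w by (metis insert_iff less_irrefl)
    ultimately show ?thesis
      using abs_less_of_sum_squares[OF \<open>finite D\<close> moment2, of a b] nonzero q by force
  qed
  have quadratic: "(\<Sum>a\<in>D. (f a - x) * (f a - y)) = q\<^sup>2 - (x + y) * q + x * y * (q - 1)" for x y
    by (simp add: sum_quadratic_moment moment1 moment2 card_D)
  have in_values: "f a \<in> {A, B, C}" if "a \<in> D" for a
    using that image_f by blast
  obtain aA aB aC where "aA \<in> D" "f aA = A" "aB \<in> D" "f aB = B" "aC \<in> D" "f aC = C"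
    using attained by (metis insertCI)
  note signs = sum_three_valued_products_signs[OF \<open>finite D\<close> in_values order this]
  have "(\<Sum>a\<in>D. (f a - A) * (f a - B) * (f a - C)) = 0"
    using in_values by (intro sum.neutral) auto
  then have "(\<Sum>a\<in>D. f a ^ 3) = (A + B + C) * q\<^sup>2 - (A * B + B * C + C * A) * q + A * B * C * (q - 1)"
    unfolding sum_cubic_moment moment1 moment2 card_D by simp
  then have "q\<^sup>2 dvd (q + A) * (q + B) * (q + C)"
    using moment3 dvd_cube_moment_imp_dvd_product by simp
  moreover have "A \<noteq> 0" "B \<noteq> 0" "C \<noteq> 0"
    using image_f nonzero by auto
  ultimately show False
    using no_three_nonzero_values[OF q order] bounded signs unfolding quadratic by simp
qed

theorem theorem4:
  fixes \<alpha> :: "'a::{field,finite}" and m d :: nat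
  assumes "m \<ge> 1"
    and "card (UNIV :: 'a set) = 2 ^ m"
    and "mult_generator \<alpha>"
    and "d > 0"
    and "coprime d (2 ^ m - 1)"
    and "card (cross_corr m \<alpha> d ` {0..<2 ^ m - 1}) = 3"
  shows "\<exists>t\<in>{0..<2 ^ m - 1}. cross_corr m \<alpha> d t = -1"
proof (rule ccontr)
  assume no_minus_one: "\<not> (\<exists>t\<in>{0..<2 ^ m - 1}. cross_corr m \<alpha> d t = -1)"
  let ?W = "walsh_power m d :: 'a \<Rightarrow> int" and ?D = "UNIV - {0::'a}"
  have "cross_corr m \<alpha> d ` {0..<2 ^ m - 1} = (\<lambda>w. w - 1) ` ?W ` (\<lambda>t. inverse (\<alpha> ^ t)) ` {0..<2 ^ m - 1}"
    by (simp add: image_image cross_corr_eq_walsh_power[OF assms(4)])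
  then have image: "cross_corr m \<alpha> d ` {0..<2 ^ m - 1} = (\<lambda>w. w - 1) ` ?W ` ?D"
    by (simp only: inverse_powers_eq_nonzero[OF assms(2,3)])
  have three: "card (?W ` ?D) = 3"
    using assms(6) unfolding image by (simp add: card_image inj_on_def)
  have nonzero: "0 \<notin> ?W ` ?D"
  proof
    assume "0 \<in> ?W ` ?D"
    then have "-1 \<in> cross_corr m \<alpha> d ` {0..<2 ^ m - 1}"
      unfolding image by (metis diff_0 image_eqI)
    then obtain t where "t \<in> {0..<2 ^ m - 1}" "cross_corr m \<alpha> d t = -1"
      by (metis imageE)
    with no_minus_one show False
      by blast
  qed
  have card_D: "int (card ?D) = 2 ^ m - 1"
    using assms(2) by (simp add: card_Diff_singleton of_nat_diff)
  have "?W 0 = 0"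
    by (rule walsh_power_zero[OF assms(2,4,5)])
  then have moments: "(\<Sum>a\<in>?D. ?W a) = 2 ^ m" "(\<Sum>a\<in>?D. (?W a)\<^sup>2) = (2 ^ m)\<^sup>2"
      "(2 ^ m)\<^sup>2 dvd (\<Sum>a\<in>?D. ?W a ^ 3)"
    using sum_walsh_power[OF assms(2,4)] sum_walsh_power_square[OF assms(2)]
      dvd_sum_walsh_power_cube[OF assms(2,4,5)]
    by (simp_all add: sum_diff1)
  show False
    using three_valued_moments_impossible[OF refl _ card_D three nonzero moments] by simp
qed

end
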